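(* Let $(X,d)$, $(\Lambda,d_\Lambda)$ be compact metric spaces, $\tau:\Lambda\times X\to X$ continuous and $q:X\to\mathcal P(\Lambda)$ continuous. Assume: (M1) there is $s>0$ such that $\int_\Lambda|f(\tau(\lambda,x))-f(\tau(\lambda,y))|\,dq_x(\lambda)\le s\,d(x,y)$ for all $x,y\in X$ and all $f\in\mathrm{Lip}_1(X)$; (H2) there is $r\ge0$ with $d(\tau(\lambda_1,x),\tau(\lambda_2,x))\le r\,d_\Lambda(\lambda_1,\lambda_2)$ for all $\lambda_1,\lambda_2\in\Lambda$, $x\in X$; (H3) there is $t\ge0$ with $d_{MK}(q_x,q_y)\le t\,d(x,y)$ for all $x,y\in X$. Then $T_q$ is $(s+r t)$-Lipschitz with respect to $d_{MK}$ on $\mathcal P(X)$.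
   Context: $\mathcal{P}(Y)$ is the set of Borel probability measures on a compact metric space $Y$, with $d_{MK}(\mu,\nu)=\sup_{f\in \mathrm{Lip}_1(Y)}\{\int f\,d\mu-\int f\,d\nu\}$, where $\mathrm{Lip}_1(Y)$ is the set of real $1$-Lipschitz functions on $Y$. The transfer operator is $B_q(f)(x)=\int_\Lambda f(\tau(\lambda,x))\,dq_x(\lambda)$ and the Markov operator $T_q$ on $\mathcal P(X)$ is defined by $\int f\,dT_q(\mu)=\int B_q(f)\,d\mu$ for $f\in C(X)$. *)

theory Defs
  imports "HOL-Probability.Probability"
begin

definition prob_borel :: "'a::metric_space measure \<Rightarrow> bool" where
  "prob_borel M \<longleftrightarrow> prob_space M \<and> sets M = sets borel"

definition dMK :: "'a::metric_space measure \<Rightarrow> 'a measure \<Rightarrow> real" where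
  "dMK \<mu> \<nu> = Sup {(\<integral>y. f y \<partial>\<mu>) - (\<integral>y. f y \<partial>\<nu>) | f :: 'a \<Rightarrow> real. 1-lipschitz_on UNIV f}"

definition Bq :: "('x \<Rightarrow> 'l::metric_space measure) \<Rightarrow> ('l \<Rightarrow> 'x \<Rightarrow> 'x) \<Rightarrow> ('x \<Rightarrow> real) \<Rightarrow> 'x \<Rightarrow> real" where
  "Bq q \<tau> f x = (\<integral>l. f (\<tau> l x) \<partial>(q x))"

definition Tq :: "('x::metric_space \<Rightarrow> 'l::metric_space measure) \<Rightarrow> ('l \<Rightarrow> 'x \<Rightarrow> 'x) \<Rightarrow> 'x measure \<Rightarrow> 'x measure" where
  "Tq q \<tau> \<mu> = (THE \<nu>. prob_borel \<nu> \<and>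
     (\<forall>f :: 'x \<Rightarrow> real. continuous_on UNIV f \<longrightarrow> (\<integral>x. f x \<partial>\<nu>) = (\<integral>x. Bq q \<tau> f x \<partial>\<mu>)))"

definition weak_continuous :: "('x::topological_space \<Rightarrow> 'l::metric_space measure) \<Rightarrow> bool" where
  "weak_continuous q \<longleftrightarrow> (\<forall>f :: 'l \<Rightarrow> real. continuous_on UNIV f \<longrightarrow>
      continuous_on UNIV (\<lambda>x. \<integral>l. f l \<partial>(q x)))"

end

(* For a 1-Lipschitz f, B_q f(x) - B_q f(y) splits into the integral of
   f(tau(l,x)) - f(tau(l,y)) against q_x, at most s d(x,y) by (M1), and the integral of the
   r-Lipschitz function l |-> f(tau(l,y)) against q_x - q_y, at most r t d(x,y) by (H2) and (H3).
   So B_q maps Lip_1 into Lip_(s+rt), and the duality  int f dT_q(mu) = int B_q f dmu  turns this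
   into the bound on d_MK.  The measure T_q(mu) exists as the bind of mu with the kernel
   x |-> image of q_x under tau(-,x); it is unique because a Borel probability measure on a metric
   space is determined by the integrals of the continuous cutoffs min 1 (n d(x, -U)), which
   increase to the indicator of the open set U. *)

theory Submission
  imports Defs
begin

lemma prob_borel_prob_space: "prob_borel M \<Longrightarrow> prob_space M"
  by (simp add: prob_borel_def)

lemma sets_prob_borel: "prob_borel M \<Longrightarrow> sets M = sets borel"
  by (simp add: prob_borel_def)

lemma space_prob_borel: "prob_borel M \<Longrightarrow> space M = UNIV"
  using sets_eq_imp_space_eq[OF sets_prob_borel] by simp

lemma measurable_prob_borel: "prob_borel M \<Longrightarrow> measurable M N = measurable borel N"
  by (rule measurable_cong_sets[OF sets_prob_borel refl])

lemma bounded_continuous_on_compact_UNIV: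
  fixes f :: "'a::metric_space \<Rightarrow> real"
  assumes "compact (UNIV :: 'a set)" "continuous_on UNIV f"
  obtains B where "\<And>x. \<bar>f x\<bar> \<le> B"
proof -
  have "bounded (range f)"
    using assms by (intro compact_imp_bounded compact_continuous_image)
  then show ?thesis
    using that by (auto simp: bounded_iff)
qed

lemma integrable_continuous_prob_borel:
  fixes f :: "'a::metric_space \<Rightarrow> real"
  assumes "compact (UNIV :: 'a set)" "continuous_on UNIV f" "prob_borel \<mu>"
  shows "integrable \<mu> f"
proof -
  interpret prob_space \<mu>
    using assms(3) by (rule prob_borel_prob_space)
  obtain B where "\<And>x. \<bar>f x\<bar> \<le> B"
    using bounded_continuous_on_compact_UNIV assms(1,2) by blast
  moreover have "f \<in> borel_measurable \<mu>"
    unfolding measurable_prob_borel[OF assms(3)] using assms(2) by (rule borel_measurable_continuous_onI)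
  ultimately show ?thesis
    by (intro integrable_const_bound[where B = B]) auto
qed

definition open_cutoff :: "'a::metric_space set \<Rightarrow> nat \<Rightarrow> 'a \<Rightarrow> real" where
  "open_cutoff U n x = min 1 (real n * infdist x (- U))"

lemma lipschitz_on_open_cutoff: "(real n)-lipschitz_on UNIV (open_cutoff U n)"
proof (rule lipschitz_onI)
  fix x y :: 'a
  have "\<bar>real n * infdist x (- U) - real n * infdist y (- U)\<bar> \<le> real n * dist x y"
    using infdist_triangle_abs[of x "- U" y]
    by (metis abs_mult abs_of_nat mult_left_mono of_nat_0_le_iff right_diff_distrib)
  then show "dist (open_cutoff U n x) (open_cutoff U n y) \<le> real n * dist x y"
    unfolding open_cutoff_def dist_real_def by (simp add: abs_le_iff min_def split: if_splits)
qed simp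

lemma continuous_on_open_cutoff: "continuous_on UNIV (open_cutoff U n)"
  using lipschitz_on_open_cutoff by (rule lipschitz_on_continuous_on)

lemma open_cutoff_nonneg: "0 \<le> open_cutoff U n x"
  and open_cutoff_le_one: "open_cutoff U n x \<le> 1"
  by (auto simp: open_cutoff_def infdist_nonneg)

lemma incseq_open_cutoff: "incseq (\<lambda>n. ennreal (open_cutoff U n x))"
  unfolding incseq_def open_cutoff_def
  by (auto intro!: ennreal_leI min.mono mult_right_mono infdist_nonneg)

lemma SUP_open_cutoff:
  assumes "open U" "U \<noteq> UNIV"
  shows "(SUP n. ennreal (open_cutoff U n x)) = indicator U x"
proof (cases "x \<in> U")
  case True
  have "0 < infdist x (- U)"
    using assms True by (intro infdist_pos_not_in_closed) auto
  then obtain n where "1 < real n * infdist x (- U)"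
    using ex_less_of_nat_mult by blast
  then have "open_cutoff U n x = 1"
    by (simp add: open_cutoff_def)
  then have "(SUP n. ennreal (open_cutoff U n x)) = 1"
    by (intro antisym SUP_least SUP_upper2[of n]) (auto simp: open_cutoff_le_one)
  then show ?thesis
    using True by simp
qed (simp add: open_cutoff_def)

lemma emeasure_open_eq_SUP_integral_open_cutoff:
  fixes \<mu> :: "'a::metric_space measure"
  assumes "compact (UNIV :: 'a set)" "prob_borel \<mu>" "open U" "U \<noteq> UNIV"
  shows "emeasure \<mu> U = (SUP n. ennreal (\<integral>x. open_cutoff U n x \<partial>\<mu>))"
proof -
  have meas: "open_cutoff U n \<in> borel_measurable \<mu>" for n
    unfolding measurable_prob_borel[OF assms(2)]
    by (rule borel_measurable_continuous_onI[OF continuous_on_open_cutoff])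
  have "U \<in> sets \<mu>"
    using sets_prob_borel[OF assms(2)] assms(3) by simp
  then have "emeasure \<mu> U = (\<integral>\<^sup>+x. (SUP n. ennreal (open_cutoff U n x)) \<partial>\<mu>)"
    using SUP_open_cutoff[OF assms(3,4)] by simp
  also have "\<dots> = (SUP n. (\<integral>\<^sup>+x. ennreal (open_cutoff U n x) \<partial>\<mu>))"
    using incseq_open_cutoff meas
    by (intro nn_integral_monotone_convergence_SUP) (auto simp: incseq_def le_fun_def)
  also have "\<dots> = (SUP n. ennreal (\<integral>x. open_cutoff U n x \<partial>\<mu>))"
    by (intro SUP_cong refl nn_integral_eq_integral
        integrable_continuous_prob_borel[OF assms(1) continuous_on_open_cutoff assms(2)])
      (auto simp: open_cutoff_nonneg)
  finally show ?thesis .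
qed

lemma prob_borel_eqI_continuous:
  fixes \<mu> \<nu> :: "'a::metric_space measure"
  assumes "compact (UNIV :: 'a set)" "prob_borel \<mu>" "prob_borel \<nu>"
    and eq: "\<And>f :: 'a \<Rightarrow> real. continuous_on UNIV f \<Longrightarrow> (\<integral>x. f x \<partial>\<mu>) = (\<integral>x. f x \<partial>\<nu>)"
  shows "\<mu> = \<nu>"
proof (rule measure_eqI_generator_eq[where E = "{S. open S}" and \<Omega> = UNIV and A = "\<lambda>_. UNIV"])
  interpret \<mu>: prob_space \<mu>
    using assms(2) by (rule prob_borel_prob_space)
  interpret \<nu>: prob_space \<nu>
    using assms(3) by (rule prob_borel_prob_space)
  show "sets \<mu> = sigma_sets UNIV {S. open S}" "sets \<nu> = sigma_sets UNIV {S. open S}"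
    using assms(2,3) by (auto simp: prob_borel_def sets_borel)
  show "emeasure \<mu> UNIV \<noteq> \<infinity>"
    using \<mu>.emeasure_space_1 space_prob_borel[OF assms(2)] by simp
  fix U :: "'a set"
  assume "U \<in> {S. open S}"
  then show "emeasure \<mu> U = emeasure \<nu> U"
    using \<mu>.emeasure_space_1 \<nu>.emeasure_space_1 space_prob_borel[OF assms(2)]
      space_prob_borel[OF assms(3)] eq[OF continuous_on_open_cutoff]
      emeasure_open_eq_SUP_integral_open_cutoff[OF assms(1,2)]
      emeasure_open_eq_SUP_integral_open_cutoff[OF assms(1,3)]
    by (cases "U = UNIV") auto
qed (auto simp: Int_stable_def)

lemma bdd_above_integral_diff_lipschitz:
  fixes \<mu> \<nu> :: "'a::metric_space measure"
  assumes "compact (UNIV :: 'a set)" "prob_borel \<mu>" "prob_borel \<nu>"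
  shows "bdd_above {(\<integral>y. f y \<partial>\<mu>) - (\<integral>y. f y \<partial>\<nu>) | f :: 'a \<Rightarrow> real. 1-lipschitz_on UNIV f}"
proof -
  interpret \<mu>: prob_space \<mu>
    using assms(2) by (rule prob_borel_prob_space)
  interpret \<nu>: prob_space \<nu>
    using assms(3) by (rule prob_borel_prob_space)
  fix a :: 'a
  obtain D where D: "\<And>x. dist a x \<le> D"
    using bounded_any_center compact_imp_bounded[OF assms(1)] by (metis UNIV_I)
  have "(\<integral>y. f y \<partial>\<mu>) - (\<integral>y. f y \<partial>\<nu>) \<le> 2 * D" if f: "1-lipschitz_on UNIV f" for f :: "'a \<Rightarrow> real"
  proof -
    have cf: "continuous_on UNIV f"
      using f by (rule lipschitz_on_continuous_on)
    have bound: "\<bar>f x - f a\<bar> \<le> D" for x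
      using lipschitz_onD[OF f, of x a] D[of x] by (simp add: dist_real_def dist_commute)
    have upper: "f x \<le> f a + D" and lower: "f a - D \<le> f x" for x
      using bound[of x] by (auto simp: abs_le_iff)
    have "(\<integral>y. f y \<partial>\<mu>) \<le> (\<integral>y. f a + D \<partial>\<mu>)"
      using upper by (intro integral_mono integrable_continuous_prob_borel[OF assms(1) cf assms(2)]) auto
    moreover have "(\<integral>y. f a - D \<partial>\<nu>) \<le> (\<integral>y. f y \<partial>\<nu>)"
      using lower by (intro integral_mono integrable_continuous_prob_borel[OF assms(1) cf assms(3)]) auto
    ultimately show ?thesis
      by (simp add: \<mu>.prob_space \<nu>.prob_space)
  qed
  then show ?thesis
    by (auto intro!: bdd_aboveI[where M = "2 * D"])
qed

lemma integral_diff_le_dMK: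
  fixes \<mu> \<nu> :: "'a::metric_space measure"
  assumes "compact (UNIV :: 'a set)" "prob_borel \<mu>" "prob_borel \<nu>" "C-lipschitz_on UNIV f"
  shows "(\<integral>y. f y \<partial>\<mu>) - (\<integral>y. f y \<partial>\<nu>) \<le> C * dMK \<mu> \<nu>"
proof (cases "C = 0")
  case True
  interpret \<mu>: prob_space \<mu>
    using assms(2) by (rule prob_borel_prob_space)
  interpret \<nu>: prob_space \<nu>
    using assms(3) by (rule prob_borel_prob_space)
  fix a
  have "f = (\<lambda>_. f a)"
    using lipschitz_onD[OF assms(4)] True by fastforce
  then obtain c where "f = (\<lambda>_. c)"
    by blast
  then show ?thesis
    using True by (simp add: \<mu>.prob_space \<nu>.prob_space)
next
  case False
  then have C: "C > 0"
    using lipschitz_on_nonneg[OF assms(4)] by simp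
  have "1-lipschitz_on UNIV (\<lambda>y. inverse C * f y)"
    using lipschitz_on_cmult_real_nonneg[OF assms(4), of "inverse C"] C by simp
  then have dual: "(\<integral>y. inverse C * f y \<partial>\<mu>) - (\<integral>y. inverse C * f y \<partial>\<nu>) \<le> dMK \<mu> \<nu>"
    unfolding dMK_def by (intro cSup_upper bdd_above_integral_diff_lipschitz assms(1-3)) blast
  have "(\<integral>y. f y \<partial>\<mu>) - (\<integral>y. f y \<partial>\<nu>)
      = C * ((\<integral>y. inverse C * f y \<partial>\<mu>) - (\<integral>y. inverse C * f y \<partial>\<nu>))"
    using C by (simp add: right_diff_distrib field_simps)
  also have "\<dots> \<le> C * dMK \<mu> \<nu>"
    using dual C by (intro mult_left_mono) auto
  finally show ?thesis .
qed

lemma dMK_le_by_duality: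
  fixes \<mu> \<nu> \<mu>' \<nu>' :: "'a::metric_space measure" and B :: "('a \<Rightarrow> real) \<Rightarrow> 'a \<Rightarrow> real"
  assumes "compact (UNIV :: 'a set)" "prob_borel \<mu>" "prob_borel \<nu>"
    and B: "\<And>f. 1-lipschitz_on UNIV f \<Longrightarrow> C-lipschitz_on UNIV (B f)"
    and \<mu>': "\<And>f. continuous_on UNIV f \<Longrightarrow> (\<integral>x. f x \<partial>\<mu>') = (\<integral>x. B f x \<partial>\<mu>)"
    and \<nu>': "\<And>f. continuous_on UNIV f \<Longrightarrow> (\<integral>x. f x \<partial>\<nu>') = (\<integral>x. B f x \<partial>\<nu>)"
  shows "dMK \<mu>' \<nu>' \<le> C * dMK \<mu> \<nu>"
  unfolding dMK_def[of \<mu>']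
proof (rule cSup_least)
  have "1-lipschitz_on UNIV (\<lambda>_ :: 'a. 0 :: real)"
    by (rule lipschitz_on_mono[OF lipschitz_on_constant]) auto
  then show "{(\<integral>y. f y \<partial>\<mu>') - (\<integral>y. f y \<partial>\<nu>') | f :: 'a \<Rightarrow> real. 1-lipschitz_on UNIV f} \<noteq> {}"
    by blast
next
  fix z
  assume "z \<in> {(\<integral>y. f y \<partial>\<mu>') - (\<integral>y. f y \<partial>\<nu>') | f :: 'a \<Rightarrow> real. 1-lipschitz_on UNIV f}"
  then obtain f :: "'a \<Rightarrow> real" where f: "1-lipschitz_on UNIV f"
    and z: "z = (\<integral>y. f y \<partial>\<mu>') - (\<integral>y. f y \<partial>\<nu>')"
    by blast
  have "z = (\<integral>x. B f x \<partial>\<mu>) - (\<integral>x. B f x \<partial>\<nu>)"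
    using z \<mu>' \<nu>' lipschitz_on_continuous_on[OF f] by simp
  also have "\<dots> \<le> C * dMK \<mu> \<nu>"
    using assms(1-3) B[OF f] by (rule integral_diff_le_dMK)
  finally show "z \<le> C * dMK \<mu> \<nu>" .
qed

lemma borel_measurable_integral_open_cutoff:
  fixes K :: "'b \<Rightarrow> 'a::metric_space measure"
  assumes "\<And>f :: 'a \<Rightarrow> real. 1-lipschitz_on UNIV f \<Longrightarrow> (\<lambda>x. \<integral>y. f y \<partial>K x) \<in> borel_measurable M"
  shows "(\<lambda>x. \<integral>y. open_cutoff U n y \<partial>K x) \<in> borel_measurable M"
proof (cases "n = 0")
  case True
  then show ?thesis
    by (simp add: open_cutoff_def)
next
  case False
  have "1-lipschitz_on UNIV (\<lambda>y. inverse (real n) * open_cutoff U n y)"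
    using lipschitz_on_cmult_real_nonneg[OF lipschitz_on_open_cutoff[of n U], of "inverse (real n)"] False
    by simp
  then have "(\<lambda>x. \<integral>y. inverse (real n) * open_cutoff U n y \<partial>K x) \<in> borel_measurable M"
    by (rule assms)
  then have "(\<lambda>x. real n * (\<integral>y. inverse (real n) * open_cutoff U n y \<partial>K x)) \<in> borel_measurable M"
    by (rule borel_measurable_times[OF borel_measurable_const])
  then show ?thesis
    using False by (simp add: mult.assoc[symmetric])
qed

lemma measurable_prob_algebra_borel_lipschitz:
  fixes K :: "'b \<Rightarrow> 'a::metric_space measure"
  assumes "compact (UNIV :: 'a set)" and K: "\<And>x. prob_borel (K x)"
    and lipschitz: "\<And>f :: 'a \<Rightarrow> real. 1-lipschitz_on UNIV f \<Longrightarrow> (\<lambda>x. \<integral>y. f y \<partial>K x) \<in> borel_measurable M"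
  shows "K \<in> M \<rightarrow>\<^sub>M prob_algebra borel"
proof (rule measurable_prob_algebra_generated[where G = "{S. open S}" and \<Omega> = UNIV])
  show "prob_space (K x)" "sets (K x) = sets borel" for x
    using K[of x] by (auto simp: prob_borel_def)
  fix U :: "'a set"
  assume "U \<in> {S. open S}"
  then have U: "open U"
    by simp
  show "(\<lambda>x. emeasure (K x) U) \<in> borel_measurable M"
  proof (cases "U = UNIV")
    case True
    then show ?thesis
      using prob_space.emeasure_space_1[OF prob_borel_prob_space[OF K]] space_prob_borel[OF K]
      by simp
  next
    case False
    have "(\<lambda>x. SUP n. ennreal (\<integral>y. open_cutoff U n y \<partial>K x)) \<in> borel_measurable M"
      using borel_measurable_integral_open_cutoff[OF lipschitz] by measurable
    then show ?thesis
      using emeasure_open_eq_SUP_integral_open_cutoff[OF assms(1) K U False] by simp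
  qed
qed (auto simp: sets_borel Int_stable_def)

lemma
  fixes K :: "'a::metric_space \<Rightarrow> 'b::metric_space measure" and f :: "'b \<Rightarrow> real"
  assumes "compact (UNIV :: 'b set)" "prob_borel \<mu>" and K: "K \<in> borel \<rightarrow>\<^sub>M prob_algebra borel"
  shows prob_borel_bind: "prob_borel (\<mu> \<bind> K)"
    and integral_bind_continuous:
      "continuous_on UNIV f \<Longrightarrow> (\<integral>y. f y \<partial>(\<mu> \<bind> K)) = (\<integral>x. (\<integral>y. f y \<partial>K x) \<partial>\<mu>)"
proof -
  interpret prob_space \<mu>
    using assms(2) by (rule prob_borel_prob_space)
  have \<mu>: "\<mu> \<in> space (prob_algebra borel)"
    using assms(2) by (simp add: prob_borel_def space_prob_algebra)
  show "prob_borel (\<mu> \<bind> K)"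
    unfolding prob_borel_def using prob_space_bind'[OF \<mu> K] sets_bind'[OF \<mu> K] by simp
  assume f: "continuous_on UNIV f"
  obtain B where "\<And>y. \<bar>f y\<bar> \<le> B"
    using bounded_continuous_on_compact_UNIV[OF assms(1) f] by blast
  moreover have "K \<in> \<mu> \<rightarrow>\<^sub>M subprob_algebra borel"
    unfolding measurable_prob_borel[OF assms(2)] using K by (rule measurable_prob_algebraD)
  moreover have "prob_space (K x)" for x
    using measurable_space[OF K, of x] by (simp add: space_prob_algebra)
  ultimately show "(\<integral>y. f y \<partial>(\<mu> \<bind> K)) = (\<integral>x. (\<integral>y. f y \<partial>K x) \<partial>\<mu>)"
    by (intro integral_bind[OF borel_measurable_continuous_onI[OF f], where B = B and B' = 1])
      (auto simp: prob_space.emeasure_space_1)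
qed

lemma Bq_lipschitz:
  fixes \<tau> :: "'l::metric_space \<Rightarrow> 'x::metric_space \<Rightarrow> 'x" and q :: "'x \<Rightarrow> 'l measure"
    and f :: "'x \<Rightarrow> real"
  assumes "compact (UNIV :: 'l set)" and q: "\<And>x. prob_borel (q x)"
    and \<tau>: "\<And>x. continuous_on UNIV (\<lambda>l. \<tau> l x)"
    and f: "1-lipschitz_on UNIV f"
    and "s \<ge> 0" "r \<ge> 0" "t \<ge> 0"
    and M1: "\<And>x y. (\<integral>l. \<bar>f (\<tau> l x) - f (\<tau> l y)\<bar> \<partial>q x) \<le> s * dist x y"
    and H2: "\<And>l1 l2 x. dist (\<tau> l1 x) (\<tau> l2 x) \<le> r * dist l1 l2"
    and H3: "\<And>x y. dMK (q x) (q y) \<le> t * dist x y"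
  shows "(s + r * t)-lipschitz_on UNIV (Bq q \<tau> f)"
proof -
  have integrable: "integrable (q z) (\<lambda>l. f (\<tau> l x))" for x z
    using assms(1) continuous_on_compose2[OF lipschitz_on_continuous_on[OF f] \<tau>] q
    by (rule integrable_continuous_prob_borel) auto
  have lipschitz_\<tau>: "r-lipschitz_on UNIV (\<lambda>l. f (\<tau> l y))" for y
  proof (rule lipschitz_onI)
    show "dist (f (\<tau> l1 y)) (f (\<tau> l2 y)) \<le> r * dist l1 l2" for l1 l2
      using lipschitz_onD[OF f, of "\<tau> l1 y" "\<tau> l2 y"] H2[of l1 y l2] by simp
  qed (fact \<open>r \<ge> 0\<close>)
  have one_sided: "Bq q \<tau> f x - Bq q \<tau> f y \<le> (s + r * t) * dist x y" for x y
  proof -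
    have split: "Bq q \<tau> f x - Bq q \<tau> f y = (\<integral>l. f (\<tau> l x) - f (\<tau> l y) \<partial>q x)
        + ((\<integral>l. f (\<tau> l y) \<partial>q x) - (\<integral>l. f (\<tau> l y) \<partial>q y))"
      unfolding Bq_def using integrable by simp
    have "(\<integral>l. f (\<tau> l x) - f (\<tau> l y) \<partial>q x) \<le> (\<integral>l. \<bar>f (\<tau> l x) - f (\<tau> l y)\<bar> \<partial>q x)"
      using integrable by (intro integral_mono) auto
    also have "\<dots> \<le> s * dist x y"
      by (rule M1)
    finally have moving_point: "(\<integral>l. f (\<tau> l x) - f (\<tau> l y) \<partial>q x) \<le> s * dist x y" .
    have "(\<integral>l. f (\<tau> l y) \<partial>q x) - (\<integral>l. f (\<tau> l y) \<partial>q y) \<le> r * dMK (q x) (q y)"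
      using assms(1) q q lipschitz_\<tau> by (rule integral_diff_le_dMK)
    also have "\<dots> \<le> r * (t * dist x y)"
      using H3 \<open>r \<ge> 0\<close> by (rule mult_left_mono)
    finally have moving_measure:
      "(\<integral>l. f (\<tau> l y) \<partial>q x) - (\<integral>l. f (\<tau> l y) \<partial>q y) \<le> r * (t * dist x y)" .
    show ?thesis
      using split moving_point moving_measure by (simp add: algebra_simps)
  qed
  show ?thesis
  proof (rule lipschitz_onI)
    show "dist (Bq q \<tau> f x) (Bq q \<tau> f y) \<le> (s + r * t) * dist x y" for x y
      using one_sided[of x y] one_sided[of y x] by (simp add: dist_real_def dist_commute abs_le_iff)
  qed (use assms(5-7) in simp)
qed

lemma Tq_characterization:
  fixes \<tau> :: "'l::metric_space \<Rightarrow> 'x::metric_space \<Rightarrow> 'x" and q :: "'x \<Rightarrow> 'l measure"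
  assumes "compact (UNIV :: 'x set)" "prob_borel \<mu>" and q: "\<And>x. prob_borel (q x)"
    and \<tau>: "\<And>x. continuous_on UNIV (\<lambda>l. \<tau> l x)"
    and Bq: "\<And>f. 1-lipschitz_on UNIV f \<Longrightarrow> Bq q \<tau> f \<in> borel_measurable borel"
  shows "prob_borel (Tq q \<tau> \<mu>) \<and> (\<forall>f :: 'x \<Rightarrow> real. continuous_on UNIV f \<longrightarrow>
      (\<integral>x. f x \<partial>Tq q \<tau> \<mu>) = (\<integral>x. Bq q \<tau> f x \<partial>\<mu>))"
proof -
  define K where "K x = distr (q x) borel (\<lambda>l. \<tau> l x)" for x
  have \<tau>_measurable: "(\<lambda>l. \<tau> l x) \<in> q x \<rightarrow>\<^sub>M borel" for x
    unfolding measurable_prob_borel[OF q] using \<tau> by (rule borel_measurable_continuous_onI)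
  have K_prob_borel: "prob_borel (K x)" for x
    using prob_space.prob_space_distr[OF prob_borel_prob_space[OF q] \<tau>_measurable]
    by (simp add: K_def prob_borel_def)
  have integral_K: "(\<integral>y. f y \<partial>K x) = Bq q \<tau> f x" if "f \<in> borel_measurable borel" for f :: "'x \<Rightarrow> real" and x
    unfolding K_def Bq_def using \<tau>_measurable that by (rule integral_distr)
  have "K \<in> borel \<rightarrow>\<^sub>M prob_algebra borel"
    using assms(1) K_prob_borel
  proof (rule measurable_prob_algebra_borel_lipschitz)
    fix f :: "'x \<Rightarrow> real"
    assume f: "1-lipschitz_on UNIV f"
    then have "(\<lambda>x. \<integral>y. f y \<partial>K x) = Bq q \<tau> f"
      using integral_K borel_measurable_continuous_onI lipschitz_on_continuous_on by blast
    then show "(\<lambda>x. \<integral>y. f y \<partial>K x) \<in> borel_measurable borel"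
      using Bq[OF f] by simp
  qed
  note bind = prob_borel_bind[OF assms(1,2) this] integral_bind_continuous[OF assms(1,2) this]
  let ?T = "\<lambda>\<nu>. prob_borel \<nu> \<and> (\<forall>f :: 'x \<Rightarrow> real. continuous_on UNIV f \<longrightarrow>
      (\<integral>x. f x \<partial>\<nu>) = (\<integral>x. Bq q \<tau> f x \<partial>\<mu>))"
  have "?T (\<mu> \<bind> K)"
    using bind by (auto simp: integral_K borel_measurable_continuous_onI)
  moreover have "\<nu> = \<mu> \<bind> K" if "?T \<nu>" for \<nu>
    using assms(1) that bind(1) \<open>?T (\<mu> \<bind> K)\<close> by (intro prob_borel_eqI_continuous) auto
  ultimately have "\<exists>!\<nu>. ?T \<nu>"
    by blast
  then show ?thesis
    unfolding Tq_def by (rule theI')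
qed

theorem mainTheorem5:
  fixes \<tau> :: "'l::metric_space \<Rightarrow> 'x::metric_space \<Rightarrow> 'x"
    and q :: "'x \<Rightarrow> 'l measure"
    and s r t :: real
  assumes cX: "compact (UNIV :: 'x set)"
    and cL: "compact (UNIV :: 'l set)"
    and tau_cont: "continuous_on UNIV (\<lambda>p :: 'l \<times> 'x. \<tau> (fst p) (snd p))"
    and q_prob: "\<And>x. prob_borel (q x)"
    and q_cont: "weak_continuous q"
    and M1: "s > 0"
      "\<And>x y f. 1-lipschitz_on UNIV (f :: 'x \<Rightarrow> real) \<Longrightarrow>
         (\<integral>l. \<bar>f (\<tau> l x) - f (\<tau> l y)\<bar> \<partial>(q x)) \<le> s * dist x y"
    and H2: "r \<ge> 0" "\<And>l1 l2 x. dist (\<tau> l1 x) (\<tau> l2 x) \<le> r * dist l1 l2"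
    and H3: "t \<ge> 0" "\<And>x y. dMK (q x) (q y) \<le> t * dist x y"
  shows "\<forall>\<mu> \<nu>. prob_borel \<mu> \<and> prob_borel \<nu> \<longrightarrow>
           dMK (Tq q \<tau> \<mu>) (Tq q \<tau> \<nu>) \<le> (s + r * t) * dMK \<mu> \<nu>"
proof (intro allI impI, elim conjE)
  fix \<mu> \<nu> :: "'x measure"
  assume \<mu>: "prob_borel \<mu>" and \<nu>: "prob_borel \<nu>"
  have \<tau>: "continuous_on UNIV (\<lambda>l. \<tau> l x)" for x
    using continuous_on_compose2[OF tau_cont continuous_on_Pair[OF continuous_on_id continuous_on_const]]
    by simp
  have B: "(s + r * t)-lipschitz_on UNIV (Bq q \<tau> f)" if "1-lipschitz_on UNIV f" for f
    using cL q_prob \<tau> that less_imp_le[OF M1(1)] H2(1) H3(1) M1(2)[OF that] H2(2) H3(2)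
    by (rule Bq_lipschitz)
  have "Bq q \<tau> f \<in> borel_measurable borel" if "1-lipschitz_on UNIV f" for f
    using B[OF that] by (intro borel_measurable_continuous_onI lipschitz_on_continuous_on)
  note Tq = Tq_characterization[OF cX _ q_prob \<tau> this]
  show "dMK (Tq q \<tau> \<mu>) (Tq q \<tau> \<nu>) \<le> (s + r * t) * dMK \<mu> \<nu>"
    using cX \<mu> \<nu> B Tq[OF \<mu>] Tq[OF \<nu>] by (intro dMK_le_by_duality) blast+
qed

end
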